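(* Let $\mathcal H$ be a real Hilbert space, let $f:\mathcal H\to\mathbb R$ be a convex $\mathcal C^2(\mathcal H)$ function with nonempty set of minimizers, and let $e\in\mathcal C^1([t_0,+\infty[;\mathcal H)$. Then for any $t_0>0$ and any Cauchy data $(x_0,\dot x_0)\in\mathcal H\times\mathcal H$, the system $$\ddot x(t)+\frac{\alpha}{t}\dot x(t)+\beta\frac{d}{dt}\big(\nabla f(x(t))+e(t)\big)+\nabla f(x(t))+e(t)=0$$ with $\alpha,\beta\ge0$ admits a unique classical global solution $x:[t_0,+\infty[\to\mathcal H$ (i.e. $x\in\mathcal C^2([t_0,+\infty[)$ satisfying the equation for all $t\ge t_0$) with $(x(t_0),\dot x(t_0))=(x_0,\dot x_0)$.
   Context: Standing assumption of the paper: $f$ is convex and $\operatorname{argmin} f\neq\emptyset$. *)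

theory Defs
  imports "HOL-Analysis.Analysis"
begin

definition C2_with_gradient :: "('a::{real_inner,complete_space} \<Rightarrow> real) \<Rightarrow> ('a \<Rightarrow> 'a) \<Rightarrow> bool" where
  "C2_with_gradient f gradf \<longleftrightarrow>
     (\<forall>x. (f has_derivative (\<lambda>h. inner (gradf x) h)) (at x)) \<and>
     (\<exists>D2 :: 'a \<Rightarrow> ('a \<Rightarrow>\<^sub>L 'a). (\<forall>x. (gradf has_derivative blinfun_apply (D2 x)) (at x))
        \<and> continuous_on UNIV D2)"

definition C1_on_halfline :: "real \<Rightarrow> (real \<Rightarrow> 'a::real_normed_vector) \<Rightarrow> bool" where
  "C1_on_halfline t0 e \<longleftrightarrow>
     (\<exists>e'. (\<forall>t\<in>{t0..}. (e has_vector_derivative e' t) (at t within {t0..}))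
        \<and> continuous_on {t0..} e')"

definition classical_solution ::
  "real \<Rightarrow> real \<Rightarrow> real \<Rightarrow> ('a::{real_inner,complete_space} \<Rightarrow> 'a) \<Rightarrow> (real \<Rightarrow> 'a)
     \<Rightarrow> 'a \<Rightarrow> 'a \<Rightarrow> (real \<Rightarrow> 'a) \<Rightarrow> bool" where
  "classical_solution \<alpha> \<beta> t0 gradf e x0 v0 x \<longleftrightarrow>
     (\<exists>x' x''.
        (\<forall>t\<in>{t0..}. (x has_vector_derivative x' t) (at t within {t0..})) \<and>
        (\<forall>t\<in>{t0..}. (x' has_vector_derivative x'' t) (at t within {t0..})) \<and>
        continuous_on {t0..} x'' \<and>
        (\<forall>t\<in>{t0..}. \<exists>w. ((\<lambda>s. gradf (x s) + e s) has_vector_derivative w) (at t within {t0..}) \<and>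
             x'' t + (\<alpha> / t) *\<^sub>R x' t + \<beta> *\<^sub>R w + gradf (x t) + e t = 0) \<and>
        x t0 = x0 \<and> x' t0 = v0)"

end

theory Submission
  imports Defs
begin

(* With z = x' + \<beta> (\<nabla>f(x) + e), the equation is the first-order system
   x' = z - \<beta> (\<nabla>f(x) + e),  z' = - (\<alpha>/t) x' - \<nabla>f(x) - e,
   whose right-hand side is continuous and, since \<nabla>f is C^1, locally Lipschitz in (x, z)
   uniformly for t \<ge> t0 > 0. Banach's fixed point theorem applied to the Picard operator gives
   local solutions, and the Lipschitz bound on short intervals gives uniqueness. A solution
   on [t0, T) cannot blow up: in the derivative of the energy |x'|^2/2 + f(x) the damping term
   and, by convexity, the Hessian term are nonpositive, so the derivative is at most
   |x'| |e + \<beta> e'|; as f is bounded below, x' stays bounded on [t0, T). Hence x, and then z,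
   are Lipschitz near T and converge, and the solution extends beyond T. *)

lemma bounded_vector_derivative_imp_lipschitz:
  fixes f :: "real \<Rightarrow> 'b::real_normed_vector"
  assumes "convex S"
    and "\<And>t. t \<in> S \<Longrightarrow> (f has_vector_derivative f' t) (at t within S)"
    and "\<And>t. t \<in> S \<Longrightarrow> norm (f' t) \<le> K" and "0 \<le> K"
  shows "K-lipschitz_on S f"
proof (rule bounded_derivative_imp_lipschitz[where f' = "\<lambda>t h. h *\<^sub>R f' t"])
  show "(f has_derivative (\<lambda>h. h *\<^sub>R f' t)) (at t within S)" if "t \<in> S" for t
    using assms(2)[OF that] by (simp add: has_vector_derivative_def)
  show "onorm (\<lambda>h. h *\<^sub>R f' t) \<le> K" if "t \<in> S" for t
    using assms(3)[OF that] by (simp add: onorm_scaleR_left onorm_id)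
qed (use assms in auto)

lemma lipschitz_on_has_limit_at_left:
  fixes f :: "real \<Rightarrow> 'b::complete_space"
  assumes "K-lipschitz_on {a..<b} f" "a < b"
  obtains l where "(f \<longlongrightarrow> l) (at_left b)"
proof -
  have "b \<in> closure {a..<b}" using \<open>a < b\<close> by simp
  with lipschitz_on_uniformly_continuous[OF assms(1)]
  obtain l where "(f \<longlongrightarrow> l) (at b within {a..<b})"
    by (rule uniformly_continuous_on_extension_at_closure)
  moreover have "at b within {a..<b} = at_left b"
    by (rule at_within_nhd[where S = "{a<..}"]) (use \<open>a < b\<close> in auto)
  ultimately show ?thesis using that by simp
qed

lemma tendsto_at_left_imp_bounded_near:
  fixes h :: "real \<Rightarrow> 'b::real_normed_vector"
  assumes "(h \<longlongrightarrow> l) (at_left T)" "a < T"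
  obtains c where "a \<le> c" "c < T" "\<And>t. t \<in> {c..<T} \<Longrightarrow> norm (h t) \<le> norm l + 1"
proof -
  have "\<forall>\<^sub>F t in at_left T. dist (h t) l < 1" using assms(1) by (rule tendstoD) simp
  then obtain b where "b < T" and b: "\<And>t. b < t \<Longrightarrow> t < T \<Longrightarrow> dist (h t) l < 1"
    using \<open>a < T\<close> by (auto simp: eventually_at_left)
  show thesis
  proof
    show "a \<le> max a ((b + T) / 2)" "max a ((b + T) / 2) < T" using \<open>b < T\<close> \<open>a < T\<close> by auto
    show "norm (h t) \<le> norm l + 1" if "t \<in> {max a ((b + T) / 2)..<T}" for t
      using b[of t] that norm_triangle_sub[of "h t" l] by (auto simp: dist_norm)
  qed
qed

lemma square_le_linear_imp_le:
  fixes n A K :: real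
  assumes "n * n \<le> A + K * n" "0 \<le> A" "0 \<le> K"
  shows "n \<le> 1 + A + K"
proof (cases "n \<le> 1")
  case False
  then have "A \<le> A * n" using \<open>0 \<le> A\<close> by (simp add: mult_le_cancel_left1)
  with assms(1) have "n * n \<le> (A + K) * n" by (simp add: distrib_right)
  then show ?thesis using False by simp
qed (use assms in simp)

lemma convex_on_gradient_inequality:
  fixes f :: "'a::real_inner \<Rightarrow> real"
  assumes convex: "convex_on UNIV f"
    and f': "\<And>x. (f has_derivative (\<lambda>h. inner (g x) h)) (at x)"
  shows "f x + inner (g x) (y - x) \<le> f y"
proof -
  define \<phi> where "\<phi> s = f (x + s *\<^sub>R (y - x))" for s :: real
  have "(\<phi> has_real_derivative inner (g (x + 0 *\<^sub>R (y - x))) (y - x)) (at 0)"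
    unfolding \<phi>_def has_field_derivative_def
    by (rule has_derivative_compose[OF _ f', unfolded o_def, THEN has_derivative_eq_rhs])
       (auto intro!: derivative_eq_intros simp: fun_eq_iff)
  moreover have "convex_on UNIV \<phi>"
    unfolding convex_on_def
  proof (intro conjI ballI allI impI)
    fix s1 s2 u v :: real assume "u \<ge> 0" "v \<ge> 0" "u + v = 1"
    then have "x + (u *\<^sub>R s1 + v *\<^sub>R s2) *\<^sub>R (y - x)
        = u *\<^sub>R (x + s1 *\<^sub>R (y - x)) + v *\<^sub>R (x + s2 *\<^sub>R (y - x))"
      by (simp add: algebra_simps flip: scaleR_add_left)
    with convex \<open>u \<ge> 0\<close> \<open>v \<ge> 0\<close> \<open>u + v = 1\<close>
    show "\<phi> (u *\<^sub>R s1 + v *\<^sub>R s2) \<le> u * \<phi> s1 + v * \<phi> s2"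
      unfolding \<phi>_def convex_on_def by auto
  qed simp
  ultimately have "\<phi> 1 - \<phi> 0 \<ge> inner (g x) (y - x) * (1 - 0)"
    by (intro convex_on_imp_above_tangent) (auto intro: has_field_derivative_at_within)
  then show ?thesis by (simp add: \<phi>_def)
qed

lemma convex_on_gradient_monotone:
  fixes f :: "'a::real_inner \<Rightarrow> real"
  assumes "convex_on UNIV f" "\<And>x. (f has_derivative (\<lambda>h. inner (g x) h)) (at x)"
  shows "inner (g x - g y) (x - y) \<ge> 0"
  using convex_on_gradient_inequality[OF assms, of x y] convex_on_gradient_inequality[OF assms, of y x]
  by (simp add: inner_diff_left inner_diff_right inner_commute)

lemma convex_on_hessian_nonneg:
  fixes f :: "'a::real_inner \<Rightarrow> real"
  assumes convex: "convex_on UNIV f"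
    and f': "\<And>x. (f has_derivative (\<lambda>h. inner (g x) h)) (at x)"
    and g': "\<And>x. (g has_derivative D x) (at x)"
  shows "inner (D y h) h \<ge> 0"
proof -
  define \<psi> where "\<psi> s = inner (g (y + s *\<^sub>R h) - g y) h" for s :: real
  have \<psi>_sign: "\<psi> s * s \<ge> 0" for s
    using convex_on_gradient_monotone[OF convex f', of "y + s *\<^sub>R h" y] by (simp add: \<psi>_def mult.commute)
  have "((\<lambda>s. y + s *\<^sub>R h) has_derivative (\<lambda>s. s *\<^sub>R h)) (at 0)"
    by (auto intro!: derivative_eq_intros)
  from has_derivative_compose[OF this g'[of "y + 0 *\<^sub>R h"]]
  have "((\<lambda>s. g (y + s *\<^sub>R h)) has_derivative (\<lambda>s. D y (s *\<^sub>R h))) (at 0)"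
    by simp
  then have "(\<psi> has_derivative (\<lambda>s. inner (D y (s *\<^sub>R h)) h)) (at 0)"
    unfolding \<psi>_def by (auto intro!: derivative_eq_intros)
  moreover have "(\<lambda>s. inner (D y (s *\<^sub>R h)) h) = (\<lambda>s. s * inner (D y h) h)"
    using has_derivative_linear[OF g'[of y]] by (simp add: linear_cmul fun_eq_iff)
  ultimately have \<psi>': "(\<psi> has_real_derivative inner (D y h) h) (at 0)"
    unfolding has_field_derivative_def by (simp add: mult.commute[of _ "inner (D y h) h"])
  show ?thesis
  proof (rule ccontr)
    assume "\<not> ?thesis"
    then obtain d where "d > 0" "\<And>s. 0 < s \<Longrightarrow> s < d \<Longrightarrow> \<psi> s < \<psi> 0"
      using DERIV_neg_dec_right[OF \<psi>'] by force
    then have "\<psi> (d/2) < 0" by (simp add: \<psi>_def)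
    with \<psi>_sign[of "d/2"] \<open>d > 0\<close> show False
      using mult_neg_pos[of "\<psi> (d/2)" "d/2"] by linarith
  qed
qed

lemma continuous_derivative_imp_locally_lipschitz:
  fixes g :: "'a::real_normed_vector \<Rightarrow> 'b::real_normed_vector"
  assumes g': "\<And>x. (g has_derivative blinfun_apply (D x)) (at x)" and "continuous_on UNIV D"
  obtains r L where "r > 0" "L-lipschitz_on (cball p r) g"
proof -
  obtain r where "r > 0" and r: "\<And>y. dist y p < r \<Longrightarrow> dist (D y) (D p) < 1"
    using \<open>continuous_on UNIV D\<close> unfolding continuous_on_iff by (meson UNIV_I zero_less_one)
  have "(norm (D p) + 1)-lipschitz_on (cball p (r/2)) g"
  proof (rule bounded_derivative_imp_lipschitz)
    show "(g has_derivative blinfun_apply (D x)) (at x within cball p (r/2))" for x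
      using g' by (rule has_derivative_at_withinI)
    show "onorm (blinfun_apply (D x)) \<le> norm (D p) + 1" if "x \<in> cball p (r/2)" for x
      using r[of x] that \<open>r > 0\<close> norm_triangle_sub[of "D x" "D p"]
      by (simp add: dist_norm norm_blinfun.rep_eq norm_minus_commute)
  qed auto
  with \<open>r > 0\<close> show thesis by (intro that) auto
qed

definition ode_solution_on :: "(real \<Rightarrow> 'b::real_normed_vector \<Rightarrow> 'b) \<Rightarrow> real set \<Rightarrow> (real \<Rightarrow> 'b) \<Rightarrow> bool"
  where "ode_solution_on F I u \<longleftrightarrow> (\<forall>t\<in>I. (u has_vector_derivative F t (u t)) (at t within I))"

lemma ode_solution_on_continuous: "ode_solution_on F I u \<Longrightarrow> continuous_on I u"
  unfolding ode_solution_on_def continuous_on_eq_continuous_within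
  using has_vector_derivative_continuous by blast

lemma ode_solution_on_subset: "ode_solution_on F I u \<Longrightarrow> J \<subseteq> I \<Longrightarrow> ode_solution_on F J u"
  unfolding ode_solution_on_def by (meson has_vector_derivative_within_subset subsetD)

lemma ode_solution_on_cong:
  assumes "ode_solution_on F I u" "\<And>t. t \<in> I \<Longrightarrow> w t = u t"
  shows "ode_solution_on F I w"
  using assms unfolding ode_solution_on_def by (metis has_vector_derivative_transform)

lemma ode_solution_on_localI:
  assumes "\<And>t. t \<in> I \<Longrightarrow> \<exists>S. open S \<and> t \<in> S \<and> ode_solution_on F (I \<inter> S) u"
  shows "ode_solution_on F I u"
  unfolding ode_solution_on_def
proof
  fix t assume "t \<in> I"
  then obtain S where S: "open S" "t \<in> S" "ode_solution_on F (I \<inter> S) u" using assms by blast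
  have "at t within I \<inter> S = at t within I"
    by (rule at_within_nhd[OF \<open>t \<in> S\<close> \<open>open S\<close>]) auto
  with S \<open>t \<in> I\<close> show "(u has_vector_derivative F t (u t)) (at t within I)"
    unfolding ode_solution_on_def by force
qed

lemma ode_solution_on_by_initial_segments:
  assumes "\<And>c. c \<in> I \<Longrightarrow> \<exists>d>c. ode_solution_on F (I \<inter> {..d}) u"
  shows "ode_solution_on F I u"
proof (rule ode_solution_on_localI)
  fix c assume "c \<in> I"
  then obtain d where "c < d" and d: "ode_solution_on F (I \<inter> {..d}) u" using assms by blast
  have "ode_solution_on F (I \<inter> {..<d}) u" using d by (rule ode_solution_on_subset) auto
  with \<open>c < d\<close> show "\<exists>S. open S \<and> c \<in> S \<and> ode_solution_on F (I \<inter> S) u"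
    by (intro exI[of _ "{..<d}"]) auto
qed

lemma ode_solution_on_glue:
  assumes "ode_solution_on F {a..b} u" "ode_solution_on F {b..c} w" "u b = w b" "a \<le> b" "b \<le> c"
  shows "ode_solution_on F {a..c} (\<lambda>t. if t \<le> b then u t else w t)"
  unfolding ode_solution_on_def
proof
  fix t assume t: "t \<in> {a..c}"
  have closures: "closure {a..b} \<inter> closure {b..c} = {b}" and union: "{a..b} \<union> {b..c} = {a..c}"
    using assms(4,5) by auto
  have "((\<lambda>t. if t \<in> {a..b} then u t else w t) has_vector_derivative
      (if t \<in> {a..b} then F t (u t) else F t (w t))) (at t within {a..b} \<union> {b..c})"
    by (rule has_vector_derivative_If_within_closures[where T = "{b..c}"])
       (use assms t in \<open>auto simp: ode_solution_on_def closures union insert_absorb\<close>)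
  then have "((\<lambda>t. if t \<in> {a..b} then u t else w t) has_vector_derivative
      F t (if t \<le> b then u t else w t)) (at t within {a..c})"
    using t by (simp add: union if_distrib)
  then show "((\<lambda>t. if t \<le> b then u t else w t) has_vector_derivative
      F t (if t \<le> b then u t else w t)) (at t within {a..c})"
    by (rule has_vector_derivative_transform[OF t, rotated]) auto
qed

lemma ext_cont_in_bcontfun:
  fixes g :: "real \<Rightarrow> 'b::metric_space"
  assumes "continuous_on {a..b} g" "a \<le> b"
  shows "ext_cont g a b \<in> bcontfun"
proof -
  have "range (ext_cont g a b) \<subseteq> g ` {a..b}"
    using \<open>a \<le> b\<close> clamp_in_interval[of a b] by (auto simp: ext_cont_def)
  moreover have "bounded (g ` {a..b})"
    by (intro compact_imp_bounded compact_continuous_image assms) simp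
  ultimately have "bounded (range (ext_cont g a b))"
    by (rule bounded_subset[rotated])
  with assms show ?thesis
    by (simp add: bcontfun_def continuous_on_ext_cont)
qed

lemma closed_bcontfun_values_in:
  assumes "closed K"
  shows "closed {u :: 'a::topological_space \<Rightarrow>\<^sub>C 'b::metric_space. \<forall>t\<in>I. u t \<in> K}"
proof -
  have evaluation: "1-lipschitz_on UNIV (\<lambda>u :: 'a \<Rightarrow>\<^sub>C 'b. apply_bcontfun u t)" for t
    by (simp add: lipschitz_on_def dist_bounded)
  have "continuous (at u) (\<lambda>u :: 'a \<Rightarrow>\<^sub>C 'b. apply_bcontfun u t)" for u t
    using lipschitz_on_continuous_within[OF evaluation, of u] by simp
  then have "closed ((\<lambda>u :: 'a \<Rightarrow>\<^sub>C 'b. apply_bcontfun u t) -` K)" for t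
    using \<open>closed K\<close> by (intro continuous_closed_vimage)
  moreover have "{u :: 'a \<Rightarrow>\<^sub>C 'b. \<forall>t\<in>I. u t \<in> K} = (\<Inter>t\<in>I. (\<lambda>u. apply_bcontfun u t) -` K)"
    by auto
  ultimately show ?thesis by auto
qed

(* The integral operator of the initial value problem, frozen outside [a, b] by clamp so that it
   acts on the complete space of bounded continuous functions on the whole real line. *)
definition picard_operator ::
  "(real \<Rightarrow> 'b::banach \<Rightarrow> 'b) \<Rightarrow> real \<Rightarrow> real \<Rightarrow> 'b \<Rightarrow> (real \<Rightarrow>\<^sub>C 'b) \<Rightarrow> (real \<Rightarrow>\<^sub>C 'b)"
  where "picard_operator F a b q u = Bcontfun (ext_cont (\<lambda>t. q + integral {a..t} (\<lambda>s. F s (u s))) a b)"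

lemma picard_operator_apply:
  fixes u :: "real \<Rightarrow>\<^sub>C 'b::banach"
  assumes "a \<le> b" and cont: "continuous_on {a..b} (\<lambda>s. F s (u s))"
  shows "picard_operator F a b q u t = q + integral {a..clamp a b t} (\<lambda>s. F s (u s))"
proof -
  have "continuous_on {a..b} (\<lambda>t. q + integral {a..t} (\<lambda>s. F s (u s)))"
    by (intro continuous_intros indefinite_integral_continuous_1 integrable_continuous_real cont)
  from ext_cont_in_bcontfun[OF this \<open>a \<le> b\<close>] show ?thesis
    by (simp add: picard_operator_def Bcontfun_inverse ext_cont_def)
qed

lemma picard_operator_fixed_point:
  fixes u :: "real \<Rightarrow>\<^sub>C 'b::banach"
  assumes "a \<le> b" and cont: "continuous_on {a..b} (\<lambda>s. F s (u s))"
    and fixed: "picard_operator F a b q u = u"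
  shows "u a = q" "ode_solution_on F {a..b} u"
proof -
  have u: "u t = q + integral {a..t} (\<lambda>s. F s (u s))" if "t \<in> {a..b}" for t
    using picard_operator_apply[of a b F u q t] assms(1,2) that by (simp add: fixed)
  then show "u a = q" using \<open>a \<le> b\<close> by simp
  show "ode_solution_on F {a..b} u"
    unfolding ode_solution_on_def
  proof
    fix t assume "t \<in> {a..b}"
    have "((\<lambda>t. q + integral {a..t} (\<lambda>s. F s (u s))) has_vector_derivative F t (u t)) (at t within {a..b})"
      using cont \<open>t \<in> {a..b}\<close> by (auto intro!: derivative_eq_intros integral_has_vector_derivative)
    then show "(u has_vector_derivative F t (u t)) (at t within {a..b})"
      by (rule has_vector_derivative_transform[OF \<open>t \<in> {a..b}\<close>, rotated]) (simp add: u)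
  qed
qed

lemma picard_operator_in_cball:
  fixes u :: "real \<Rightarrow>\<^sub>C 'b::banach"
  assumes "a \<le> b" and cont: "continuous_on {a..b} (\<lambda>s. F s (u s))"
    and bound: "\<And>s. s \<in> {a..b} \<Longrightarrow> norm (F s (u s)) \<le> M" and "(b - a) * M \<le> R"
  shows "picard_operator F a b q u t \<in> cball q R"
proof -
  have clamp: "clamp a b t \<in> {a..b}" using clamp_in_interval[of a b t] \<open>a \<le> b\<close> by simp
  then have "norm (integral {a..clamp a b t} (\<lambda>s. F s (u s))) \<le> M * (clamp a b t - a)"
    using bound by (intro integral_bound continuous_on_subset[OF cont]) auto
  also have "\<dots> \<le> M * (b - a)"
    using clamp bound[of a] \<open>a \<le> b\<close> by (intro mult_left_mono) (auto intro: order_trans[OF norm_ge_zero])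
  finally show ?thesis
    using \<open>(b - a) * M \<le> R\<close> picard_operator_apply[of a b F u q t] \<open>a \<le> b\<close> cont
    by (simp add: dist_norm mult.commute)
qed

lemma picard_operator_contraction:
  fixes u v :: "real \<Rightarrow>\<^sub>C 'b::banach"
  assumes "a \<le> b" "0 \<le> L"
    and cont: "continuous_on {a..b} (\<lambda>s. F s (u s))" "continuous_on {a..b} (\<lambda>s. F s (v s))"
    and lipschitz: "\<And>s. s \<in> {a..b} \<Longrightarrow> dist (F s (u s)) (F s (v s)) \<le> L * dist (u s) (v s)"
  shows "dist (picard_operator F a b q u) (picard_operator F a b q v) \<le> ((b - a) * L) * dist u v"
proof (rule dist_bound)
  fix t
  have "clamp a b t \<in> {a..b}" using clamp_in_interval[of a b t] \<open>a \<le> b\<close> by simp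
  then have clamp: "{a..clamp a b t} \<subseteq> {a..b}" and "a \<le> clamp a b t" by auto
  have "dist (picard_operator F a b q u t) (picard_operator F a b q v t)
      = norm (integral {a..clamp a b t} (\<lambda>s. F s (u s) - F s (v s)))"
    using continuous_on_subset[OF cont(1) clamp] continuous_on_subset[OF cont(2) clamp]
    by (simp add: picard_operator_apply \<open>a \<le> b\<close> cont dist_norm integral_diff integrable_continuous_real)
  also have "\<dots> \<le> (L * dist u v) * (clamp a b t - a)"
  proof (rule integral_bound)
    show "norm (F s (u s) - F s (v s)) \<le> L * dist u v" if "s \<in> {a..clamp a b t}" for s
    proof -
      have "dist (F s (u s)) (F s (v s)) \<le> L * dist (u s) (v s)" using lipschitz that clamp by auto
      also have "\<dots> \<le> L * dist u v" using dist_bounded \<open>0 \<le> L\<close> by (rule mult_left_mono)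
      finally show ?thesis by (simp add: dist_norm)
    qed
  qed (use \<open>a \<le> clamp a b t\<close> continuous_on_subset[OF cont(1) clamp]
      continuous_on_subset[OF cont(2) clamp] in \<open>auto intro: continuous_intros\<close>)
  also have "\<dots> \<le> (L * dist u v) * (b - a)"
    using clamp \<open>0 \<le> L\<close> \<open>a \<le> b\<close> by (intro mult_left_mono) auto
  finally show "dist (picard_operator F a b q u t) (picard_operator F a b q v t) \<le> ((b - a) * L) * dist u v"
    by (simp add: algebra_simps)
qed

lemma picard_local_existence:
  fixes F :: "real \<Rightarrow> 'b::banach \<Rightarrow> 'b"
  assumes "a < b"
    and cont: "continuous_on ({a..b} \<times> cball q R) (\<lambda>(t, x). F t x)"
    and bound: "\<And>t x. t \<in> {a..b} \<Longrightarrow> x \<in> cball q R \<Longrightarrow> norm (F t x) \<le> M"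
    and lipschitz: "\<And>t. t \<in> {a..b} \<Longrightarrow> L-lipschitz_on (cball q R) (F t)"
    and "0 \<le> R" "(b - a) * M \<le> R" "(b - a) * L < 1"
  obtains u where "u a = q" "ode_solution_on F {a..b} u"
proof -
  define S where "S = {u :: real \<Rightarrow>\<^sub>C 'b. \<forall>t\<in>{a..b}. u t \<in> cball q R}"
  define P where "P = picard_operator F a b q"
  have L: "0 \<le> L" using lipschitz[of a] \<open>a < b\<close> lipschitz_on_nonneg by auto
  have F_cont: "continuous_on {a..b} (\<lambda>s. F s (u s))" if "u \<in> S" for u
    by (rule continuous_on_compose2[OF cont, of _ "\<lambda>s. (s, u s)", simplified])
       (use that in \<open>auto simp: S_def intro!: continuous_intros\<close>)
  have "P u \<in> S" if "u \<in> S" for u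
  proof -
    have "norm (F s (u s)) \<le> M" if "s \<in> {a..b}" for s
      using bound that \<open>u \<in> S\<close> by (simp add: S_def)
    then have "P u t \<in> cball q R" for t
      unfolding P_def using \<open>a < b\<close> F_cont[OF that] \<open>(b - a) * M \<le> R\<close>
      by (intro picard_operator_in_cball) auto
    then show ?thesis by (simp add: S_def)
  qed
  moreover have "dist (P u) (P v) \<le> ((b - a) * L) * dist u v" if "u \<in> S" "v \<in> S" for u v
    unfolding P_def using \<open>a < b\<close> L F_cont[OF that(1)] F_cont[OF that(2)] that
    by (intro picard_operator_contraction lipschitz_onD[OF lipschitz]) (auto simp: S_def)
  moreover have "complete S"
    unfolding S_def complete_eq_closed by (intro closed_bcontfun_values_in closed_cball)
  moreover have "const_bcontfun q \<in> S"
    using \<open>0 \<le> R\<close> by (simp add: S_def const_bcontfun.rep_eq)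
  ultimately obtain u where "u \<in> S" "P u = u"
    using Banach_fix[of S "(b - a) * L" P] L \<open>a < b\<close> \<open>(b - a) * L < 1\<close> by auto
  with picard_operator_fixed_point[of a b F u q] \<open>a < b\<close> F_cont that show thesis
    by (simp add: P_def)
qed

lemma ode_solutions_agree_on_short_interval:
  fixes F :: "real \<Rightarrow> 'b::real_normed_vector \<Rightarrow> 'b"
  assumes u: "ode_solution_on F {c..d} u" and w: "ode_solution_on F {c..d} w" and "u c = w c"
    and X: "\<And>t. t \<in> {c..d} \<Longrightarrow> u t \<in> X \<and> w t \<in> X"
    and lipschitz: "\<And>t. t \<in> {c..d} \<Longrightarrow> L-lipschitz_on X (F t)" and short: "(d - c) * L < 1"
    and "t \<in> {c..d}"
  shows "u t = w t"
proof -
  have "continuous_on {c..d} (\<lambda>\<tau>. norm (u \<tau> - w \<tau>))"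
    using u w by (intro continuous_intros ode_solution_on_continuous)
  then obtain m where m: "m \<in> {c..d}" and max: "\<And>\<tau>. \<tau> \<in> {c..d} \<Longrightarrow> norm (u \<tau> - w \<tau>) \<le> norm (u m - w m)"
    using continuous_attains_sup[of "{c..d}" "\<lambda>\<tau>. norm (u \<tau> - w \<tau>)"] \<open>t \<in> {c..d}\<close> by auto
  define D where "D = norm (u m - w m)"
  have L: "0 \<le> L" using lipschitz \<open>t \<in> {c..d}\<close> lipschitz_on_nonneg by blast
  have "(L * D)-lipschitz_on {c..d} (\<lambda>\<tau>. u \<tau> - w \<tau>)"
  proof (rule bounded_vector_derivative_imp_lipschitz)
    show "((\<lambda>\<tau>. u \<tau> - w \<tau>) has_vector_derivative F \<tau> (u \<tau>) - F \<tau> (w \<tau>)) (at \<tau> within {c..d})"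
      if "\<tau> \<in> {c..d}" for \<tau>
      using u w that unfolding ode_solution_on_def by (intro derivative_intros) auto
    show "norm (F \<tau> (u \<tau>) - F \<tau> (w \<tau>)) \<le> L * D" if "\<tau> \<in> {c..d}" for \<tau>
    proof -
      have "norm (F \<tau> (u \<tau>) - F \<tau> (w \<tau>)) \<le> L * norm (u \<tau> - w \<tau>)"
        using lipschitz_onD[OF lipschitz[OF that]] X[OF that] by (simp add: dist_norm)
      also have "\<dots> \<le> L * D" using max[OF that] L by (simp add: D_def mult_left_mono)
      finally show ?thesis .
    qed
  qed (use L in \<open>auto simp: D_def\<close>)
  from lipschitz_onD[OF this m, of c] m
  have "D \<le> (L * D) * (m - c)"
    using \<open>u c = w c\<close> by (simp add: D_def dist_norm dist_real_def)
  also have "\<dots> \<le> (L * D) * (d - c)"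
    using m L by (intro mult_left_mono) (auto simp: D_def)
  finally have "D * (1 - (d - c) * L) \<le> 0" by (simp add: algebra_simps)
  then have "D = 0" using short by (simp add: D_def mult_le_0_iff)
  then show ?thesis using max[OF \<open>t \<in> {c..d}\<close>] by (simp add: D_def)
qed

locale uniformly_locally_lipschitz_ode =
  fixes F :: "real \<Rightarrow> 'b::banach \<Rightarrow> 'b" and t0 :: real
  assumes continuous: "continuous_on ({t0..} \<times> UNIV) (\<lambda>(t, x). F t x)"
    and locally_lipschitz: "\<And>p. \<exists>r>0. \<exists>L. \<forall>t\<ge>t0. L-lipschitz_on (cball p r) (F t)"
begin

lemma solutions_agree_right_of:
  assumes "t0 \<le> c" "c < b" and u: "ode_solution_on F {c..b} u" and w: "ode_solution_on F {c..b} w"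
    and "u c = w c"
  obtains h where "h > 0" "c + h \<le> b" "\<And>\<tau>. \<tau> \<in> {c..c+h} \<Longrightarrow> u \<tau> = w \<tau>"
proof -
  obtain r L where "r > 0" and lipschitz: "\<And>s. s \<ge> t0 \<Longrightarrow> L-lipschitz_on (cball (u c) r) (F s)"
    using locally_lipschitz[of "u c"] by blast
  have "c \<in> {c..b}" using \<open>c < b\<close> by simp
  obtain \<eta>u where "\<eta>u > 0" and \<eta>u: "\<And>\<tau>. \<tau> \<in> {c..b} \<Longrightarrow> dist \<tau> c < \<eta>u \<Longrightarrow> dist (u \<tau>) (u c) < r"
    using ode_solution_on_continuous[OF u] \<open>c \<in> {c..b}\<close> \<open>r > 0\<close> unfolding continuous_on_iff by blast
  obtain \<eta>w where "\<eta>w > 0" and \<eta>w: "\<And>\<tau>. \<tau> \<in> {c..b} \<Longrightarrow> dist \<tau> c < \<eta>w \<Longrightarrow> dist (w \<tau>) (w c) < r"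
    using ode_solution_on_continuous[OF w] \<open>c \<in> {c..b}\<close> \<open>r > 0\<close> unfolding continuous_on_iff by blast
  have L: "0 \<le> L" using lipschitz[of t0] lipschitz_on_nonneg by blast
  define h where "h = min (min \<eta>u \<eta>w) (min (1 / (L + 1)) (b - c)) / 2"
  have "h > 0" using \<open>\<eta>u > 0\<close> \<open>\<eta>w > 0\<close> \<open>c < b\<close> L by (simp add: h_def)
  have h_le: "2 * h \<le> min \<eta>u \<eta>w" "2 * h \<le> 1 / (L + 1)" "2 * h \<le> b - c"
    unfolding h_def by auto
  have "c + h \<le> b" using h_le(3) \<open>h > 0\<close> by linarith
  have "2 * h * L \<le> (1 / (L + 1)) * L" using h_le(2) L by (rule mult_right_mono)
  also have "\<dots> < 1" using L by (simp add: field_simps)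
  finally have "(c + h - c) * L < 1" using \<open>h > 0\<close> L by (simp add: mult_nonneg_nonneg)
  have "u \<tau> = w \<tau>" if "\<tau> \<in> {c..c+h}" for \<tau>
  proof (rule ode_solutions_agree_on_short_interval)
    show "ode_solution_on F {c..c+h} u" "ode_solution_on F {c..c+h} w"
      using u w \<open>c + h \<le> b\<close> by (auto elim: ode_solution_on_subset)
    show "u s \<in> cball (u c) r \<and> w s \<in> cball (u c) r" if "s \<in> {c..c+h}" for s
      using \<eta>u[of s] \<eta>w[of s] that \<open>c + h \<le> b\<close> \<open>u c = w c\<close> h_le(1) \<open>h > 0\<close>
      by (auto simp: dist_real_def dist_commute)
    show "L-lipschitz_on (cball (u c) r) (F s)" if "s \<in> {c..c+h}" for s
      using lipschitz that \<open>t0 \<le> c\<close> by simp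
  qed (use \<open>u c = w c\<close> \<open>(c + h - c) * L < 1\<close> that in auto)
  with \<open>h > 0\<close> \<open>c + h \<le> b\<close> show thesis by (rule that)
qed

lemma solution_unique:
  assumes "t0 \<le> a" and u: "ode_solution_on F {a..b} u" and w: "ode_solution_on F {a..b} w"
    and "u a = w a" and "t \<in> {a..b}"
  shows "u t = w t"
proof (rule ccontr)
  define N where "N = {\<tau> \<in> {a..b}. u \<tau> \<noteq> w \<tau>}"
  define c where "c = Inf N"
  assume "u t \<noteq> w t"
  then have "t \<in> N" using \<open>t \<in> {a..b}\<close> by (simp add: N_def)
  have "bdd_below N" by (auto simp: N_def bdd_below_def)
  then have "c \<le> t" and c_least: "\<And>\<tau>. \<tau> \<in> N \<Longrightarrow> c \<le> \<tau>"
    using \<open>t \<in> N\<close> by (auto simp: c_def intro: cInf_lower)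
  have "a \<le> c" unfolding c_def using \<open>t \<in> N\<close> by (intro cInf_greatest) (auto simp: N_def)
  have "u c = w c"
  proof (cases "a = c")
    case False
    have "closed {\<tau> \<in> {a..b}. u \<tau> - w \<tau> = 0}"
      using ode_solution_on_continuous[OF u] ode_solution_on_continuous[OF w]
      by (intro continuous_closed_preimage_constant continuous_intros closed_atLeastAtMost)
    moreover have "{a..<c} \<subseteq> {\<tau> \<in> {a..b}. u \<tau> - w \<tau> = 0}"
      using c_least \<open>c \<le> t\<close> \<open>t \<in> {a..b}\<close> by (force simp: N_def)
    ultimately have "closure {a..<c} \<subseteq> {\<tau> \<in> {a..b}. u \<tau> - w \<tau> = 0}"
      by (rule closure_minimal[rotated])
    then show ?thesis using False \<open>a \<le> c\<close> by auto
  qed (use \<open>u a = w a\<close> in simp)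
  then have "c < b" using \<open>c \<le> t\<close> \<open>t \<in> {a..b}\<close> \<open>t \<in> N\<close> by (cases "t = c") (auto simp: N_def)
  moreover have "ode_solution_on F {c..b} u" "ode_solution_on F {c..b} w"
    using u w \<open>a \<le> c\<close> by (auto elim: ode_solution_on_subset)
  ultimately obtain h where "h > 0" and agree: "\<And>\<tau>. \<tau> \<in> {c..c+h} \<Longrightarrow> u \<tau> = w \<tau>"
    using solutions_agree_right_of \<open>t0 \<le> a\<close> \<open>a \<le> c\<close> \<open>u c = w c\<close> by (metis order_trans)
  have "c + h \<le> \<tau>" if "\<tau> \<in> N" for \<tau>
    using c_least[OF that] agree[of \<tau>] that by (force simp: N_def)
  then have "c + h \<le> Inf N" using \<open>t \<in> N\<close> by (intro cInf_greatest) auto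
  then show False using \<open>h > 0\<close> by (simp add: c_def)
qed

lemma local_bounds:
  obtains r L M where "r > 0" "0 \<le> L" "0 \<le> M"
    "\<And>t. t \<ge> t0 \<Longrightarrow> L-lipschitz_on (cball p r) (F t)"
    "\<And>t x. t \<in> {t0..T} \<Longrightarrow> x \<in> cball p r \<Longrightarrow> norm (F t x) \<le> M"
proof -
  obtain r L where "r > 0" and lipschitz: "\<And>t. t \<ge> t0 \<Longrightarrow> L-lipschitz_on (cball p r) (F t)"
    using locally_lipschitz[of p] by blast
  have L: "0 \<le> L" using lipschitz[of t0] lipschitz_on_nonneg by blast
  have "continuous_on {t0..T} (\<lambda>t. F t p)"
    by (rule continuous_on_compose2[OF continuous, of _ "\<lambda>t. (t, p)", simplified])
       (auto intro!: continuous_intros)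
  then have "bounded ((\<lambda>t. F t p) ` {t0..T})"
    by (intro compact_imp_bounded compact_continuous_image) auto
  then obtain Mp where Mp: "\<And>t. t \<in> {t0..T} \<Longrightarrow> norm (F t p) \<le> Mp"
    unfolding bounded_iff by blast
  define M where "M = max Mp 0 + L * r"
  have "norm (F t x) \<le> M" if "t \<in> {t0..T}" "x \<in> cball p r" for t x
  proof -
    have "norm (F t x) \<le> norm (F t p) + norm (F t x - F t p)" by (rule norm_triangle_sub)
    also have "norm (F t x - F t p) \<le> L * dist x p"
      using lipschitz_onD[OF lipschitz, of t x p] that \<open>r > 0\<close> by (simp add: dist_norm)
    also have "\<dots> \<le> L * r" using that L by (simp add: dist_commute mult_left_mono)
    finally show ?thesis using Mp[OF that(1)] by (simp add: M_def)
  qed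
  moreover have "0 \<le> M" using L \<open>r > 0\<close> by (simp add: M_def)
  ultimately show thesis using \<open>r > 0\<close> L lipschitz that by blast
qed

lemma local_existence:
  obtains r \<delta> where "r > 0" "\<delta> > 0"
    "\<And>t1 q. t1 \<in> {t0..T} \<Longrightarrow> q \<in> cball p r \<Longrightarrow> \<exists>u. u t1 = q \<and> ode_solution_on F {t1..t1+\<delta>} u"
proof -
  obtain r L M where "r > 0" "0 \<le> L" "0 \<le> M"
    and lipschitz: "\<And>t. t \<ge> t0 \<Longrightarrow> L-lipschitz_on (cball p r) (F t)"
    and bound: "\<And>t x. t \<in> {t0..T+1} \<Longrightarrow> x \<in> cball p r \<Longrightarrow> norm (F t x) \<le> M"
    using local_bounds[of p "T + 1"] by blast
  define \<delta> where "\<delta> = min 1 (min (r / 2 / (M + 1)) (1 / (2 * (L + 1))))"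
  have "\<delta> > 0" using \<open>r > 0\<close> \<open>0 \<le> M\<close> \<open>0 \<le> L\<close> by (simp add: \<delta>_def)
  have "\<delta> * M \<le> r / 2"
  proof -
    have "\<delta> * M \<le> (r / 2 / (M + 1)) * (M + 1)"
      using \<open>\<delta> > 0\<close> \<open>0 \<le> M\<close> by (intro mult_mono) (auto simp: \<delta>_def)
    also have "\<dots> = r / 2" using \<open>0 \<le> M\<close> by (simp add: field_simps)
    finally show ?thesis .
  qed
  have "\<delta> * L < 1"
  proof -
    have "\<delta> * L \<le> (1 / (2 * (L + 1))) * (L + 1)"
      using \<open>\<delta> > 0\<close> \<open>0 \<le> L\<close> by (intro mult_mono) (auto simp: \<delta>_def)
    also have "\<dots> < 1" using \<open>0 \<le> L\<close> by (simp add: field_simps)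
    finally show ?thesis .
  qed
  have "\<exists>u. u t1 = q \<and> ode_solution_on F {t1..t1+\<delta>} u" if "t1 \<in> {t0..T}" "q \<in> cball p (r/2)" for t1 q
  proof -
    have ball: "cball q (r/2) \<subseteq> cball p r"
    proof
      fix x assume "x \<in> cball q (r/2)"
      then show "x \<in> cball p r"
        using that(2) dist_triangle[of x p q] by (simp add: dist_commute)
    qed
    have times: "{t1..t1+\<delta>} \<subseteq> {t0..T+1}" using that(1) by (auto simp: \<delta>_def)
    obtain u where "u t1 = q" "ode_solution_on F {t1..t1+\<delta>} u"
    proof (rule picard_local_existence[of t1 "t1 + \<delta>" q "r/2" F M L])
      show "continuous_on ({t1..t1+\<delta>} \<times> cball q (r/2)) (\<lambda>(t, x). F t x)"
        by (rule continuous_on_subset[OF continuous]) (use times in auto)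
      show "norm (F t x) \<le> M" if "t \<in> {t1..t1+\<delta>}" "x \<in> cball q (r/2)" for t x
        using bound that times ball by blast
      show "L-lipschitz_on (cball q (r/2)) (F t)" if "t \<in> {t1..t1+\<delta>}" for t
        using lipschitz_on_subset[OF lipschitz ball] that times by auto
    qed (use \<open>\<delta> > 0\<close> \<open>r > 0\<close> \<open>\<delta> * M \<le> r / 2\<close> \<open>\<delta> * L < 1\<close> in auto)
    then show ?thesis by blast
  qed
  with \<open>r > 0\<close> \<open>\<delta> > 0\<close> show thesis by (intro that[of "r/2" \<delta>]) auto
qed

lemma maximal_solution:
  obtains U where "U t0 = u0"
    "\<And>T. (\<exists>v. v t0 = u0 \<and> ode_solution_on F {t0..T} v) \<Longrightarrow> ode_solution_on F {t0..T} U"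
proof -
  define V where "V T = (SOME v. v t0 = u0 \<and> ode_solution_on F {t0..T} v)" for T
  have V: "V T t0 = u0 \<and> ode_solution_on F {t0..T} (V T)"
    if "\<exists>v. v t0 = u0 \<and> ode_solution_on F {t0..T} v" for T
    unfolding V_def using someI_ex[OF that] .
  have "ode_solution_on F {t0..t0} (\<lambda>_. u0)"
    by (simp add: ode_solution_on_def has_vector_derivative_def has_derivative_within_singleton_iff
        bounded_linear_scaleR_left)
  then have "V t0 t0 = u0" using V[OF exI[of _ "\<lambda>_. u0"]] by simp
  moreover have "ode_solution_on F {t0..T} (\<lambda>t. V t t)" if ex: "\<exists>v. v t0 = u0 \<and> ode_solution_on F {t0..T} v" for T
  proof -
    obtain v where v: "v t0 = u0" "ode_solution_on F {t0..T} v" using ex by blast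
    have "V t t = v t" if "t \<in> {t0..T}" for t
    proof -
      have "ode_solution_on F {t0..t} v" using v(2) that by (auto elim: ode_solution_on_subset)
      with v(1) have "V t t0 = u0 \<and> ode_solution_on F {t0..t} (V t)" using V by blast
      with v show ?thesis
        using solution_unique[of t0 t "V t" v t] \<open>ode_solution_on F {t0..t} v\<close> that by auto
    qed
    with v(2) show ?thesis by (rule ode_solution_on_cong)
  qed
  ultimately show thesis using that[of "\<lambda>t. V t t"] by blast
qed

lemma solution_extends_past_limit:
  assumes "t0 < T" and u: "ode_solution_on F {t0..<T} u" and "(u \<longlongrightarrow> p) (at_left T)"
  obtains T' v where "T < T'" "v t0 = u t0" "ode_solution_on F {t0..T'} v"
proof -
  obtain r \<delta> where "r > 0" "\<delta> > 0" and extend: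
    "\<And>t1 q. t1 \<in> {t0..T} \<Longrightarrow> q \<in> cball p r \<Longrightarrow> \<exists>w. w t1 = q \<and> ode_solution_on F {t1..t1+\<delta>} w"
    using local_existence[where p = p and T = T] by blast
  have "\<forall>\<^sub>F t in at_left T. dist (u t) p < r \<and> t \<in> {max t0 (T - \<delta>)<..<T}"
    using tendstoD[OF \<open>(u \<longlongrightarrow> p) _\<close> \<open>r > 0\<close>] eventually_at_left_real[of "max t0 (T - \<delta>)" T]
      \<open>t0 < T\<close> \<open>\<delta> > 0\<close> by (auto intro: eventually_conj)
  then obtain t1 where t1: "dist (u t1) p < r" "t0 < t1" "T - \<delta> < t1" "t1 < T"
    using eventually_happens'[OF trivial_limit_at_left_real] by auto
  then obtain w where "w t1 = u t1" "ode_solution_on F {t1..t1+\<delta>} w"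
    using extend[of t1 "u t1"] by (auto simp: dist_commute)
  moreover have "ode_solution_on F {t0..t1} u" using u by (rule ode_solution_on_subset) (use t1 in auto)
  ultimately have "ode_solution_on F {t0..t1+\<delta>} (\<lambda>t. if t \<le> t1 then u t else w t)"
    using t1 \<open>\<delta> > 0\<close> by (intro ode_solution_on_glue) auto
  moreover have "T < t1 + \<delta>" using t1 by linarith
  ultimately show thesis using t1 by (intro that) auto
qed

lemma solutions_exist_on_all_intervals:
  assumes no_blowup: "\<And>T u. t0 < T \<Longrightarrow> u t0 = u0 \<Longrightarrow> ode_solution_on F {t0..<T} u \<Longrightarrow>
      \<exists>p. (u \<longlongrightarrow> p) (at_left T)"
  shows "\<exists>v. v t0 = u0 \<and> ode_solution_on F {t0..T} v"
proof (rule ccontr)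
  define solvable where "solvable T \<longleftrightarrow> (\<exists>v. v t0 = u0 \<and> ode_solution_on F {t0..T} v)" for T
  assume "\<not> ?thesis"
  then have "\<not> solvable T" by (simp add: solvable_def)
  define Ts where "Ts = Sup {s. solvable s}"
  obtain U where "U t0 = u0" and U: "\<And>T. solvable T \<Longrightarrow> ode_solution_on F {t0..T} U"
    using maximal_solution unfolding solvable_def by blast
  have solvable_le: "solvable s" if "solvable T" "s \<le> T" for s T
    using that ode_solution_on_subset[of F "{t0..T}" _ "{t0..s}"] by (auto simp: solvable_def)
  obtain r \<delta> where "r > 0" "\<delta> > 0"
    and start: "\<And>q. q \<in> cball u0 r \<Longrightarrow> \<exists>u. u t0 = q \<and> ode_solution_on F {t0..t0+\<delta>} u"
    using local_existence[where p = u0 and T = t0] by (metis atLeastAtMost_singleton singletonI)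
  have "solvable (t0 + \<delta>)" using start[of u0] \<open>r > 0\<close> by (auto simp: solvable_def)
  have "bdd_above {s. solvable s}"
  proof (rule bdd_aboveI)
    fix s assume "s \<in> {s. solvable s}"
    then show "s \<le> T" using solvable_le[of s T] \<open>\<not> solvable T\<close> by (cases "s \<le> T") auto
  qed
  then have above: "s \<le> Ts" if "solvable s" for s
    using that by (auto simp: Ts_def intro: cSup_upper)
  have below: "solvable s" if "s < Ts" for s
  proof -
    have "{s. solvable s} \<noteq> {}" using \<open>solvable (t0 + \<delta>)\<close> by blast
    then obtain s' where "solvable s'" "s < s'"
      using less_cSup_iff[OF _ \<open>bdd_above _\<close>, of s] \<open>s < Ts\<close> by (auto simp: Ts_def)
    then show ?thesis using solvable_le by auto
  qed
  from \<open>solvable (t0 + \<delta>)\<close> have "t0 < Ts" using above \<open>\<delta> > 0\<close> by fastforce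
  have "ode_solution_on F {t0..<Ts} U"
  proof (rule ode_solution_on_by_initial_segments)
    fix c assume "c \<in> {t0..<Ts}"
    then have "ode_solution_on F {t0..(c + Ts) / 2} U" by (intro U below) auto
    then have "ode_solution_on F ({t0..<Ts} \<inter> {..(c + Ts) / 2}) U"
      by (rule ode_solution_on_subset) auto
    with \<open>c \<in> {t0..<Ts}\<close> show "\<exists>d>c. ode_solution_on F ({t0..<Ts} \<inter> {..d}) U"
      by (intro exI[of _ "(c + Ts) / 2"]) auto
  qed
  then obtain p where "(U \<longlongrightarrow> p) (at_left Ts)"
    using no_blowup[of Ts U] \<open>t0 < Ts\<close> \<open>U t0 = u0\<close> by blast
  with \<open>t0 < Ts\<close> \<open>ode_solution_on F {t0..<Ts} U\<close> obtain T' where "Ts < T'" "solvable T'"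
    using \<open>U t0 = u0\<close> unfolding solvable_def by (metis solution_extends_past_limit)
  then show False using above by fastforce
qed

lemma global_existence:
  assumes "\<And>T u. t0 < T \<Longrightarrow> u t0 = u0 \<Longrightarrow> ode_solution_on F {t0..<T} u \<Longrightarrow>
      \<exists>p. (u \<longlongrightarrow> p) (at_left T)"
  obtains u where "u t0 = u0" "ode_solution_on F {t0..} u"
proof -
  obtain U where "U t0 = u0"
    and U: "\<And>T. \<exists>v. v t0 = u0 \<and> ode_solution_on F {t0..T} v \<Longrightarrow> ode_solution_on F {t0..T} U"
    using maximal_solution by blast
  have "ode_solution_on F {t0..} U"
  proof (rule ode_solution_on_by_initial_segments)
    fix c
    have "ode_solution_on F ({t0..} \<inter> {..c+1}) U"
      using U[OF solutions_exist_on_all_intervals[OF assms]] by (rule ode_solution_on_subset) auto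
    then show "\<exists>d>c. ode_solution_on F ({t0..} \<inter> {..d}) U" by (intro exI[of _ "c + 1"]) auto
  qed
  with \<open>U t0 = u0\<close> show thesis by (rule that)
qed

end

definition damped_inertial_field ::
  "real \<Rightarrow> real \<Rightarrow> ('a::real_normed_vector \<Rightarrow> 'a) \<Rightarrow> (real \<Rightarrow> 'a) \<Rightarrow> real \<Rightarrow> 'a \<times> 'a \<Rightarrow> 'a \<times> 'a"
  where "damped_inertial_field \<alpha> \<beta> g e t u =
    (snd u - \<beta> *\<^sub>R (g (fst u) + e t),
     - (\<alpha> / t) *\<^sub>R (snd u - \<beta> *\<^sub>R (g (fst u) + e t)) - g (fst u) - e t)"

lemma damped_inertial_field_continuous:
  fixes g :: "'a::real_normed_vector \<Rightarrow> 'a"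
  assumes "continuous_on UNIV g" "continuous_on {t0..} e" "t0 > 0"
  shows "continuous_on ({t0..} \<times> UNIV) (\<lambda>(t, u). damped_inertial_field \<alpha> \<beta> g e t u)"
proof -
  have "continuous_on ({t0..} \<times> UNIV) (\<lambda>p. g (fst (snd p)))"
    by (rule continuous_on_compose2[OF assms(1)]) (auto intro!: continuous_intros)
  moreover have "continuous_on ({t0..} \<times> UNIV) (\<lambda>p :: real \<times> 'a \<times> 'a. e (fst p))"
    by (rule continuous_on_compose2[OF assms(2)]) (auto intro!: continuous_intros)
  ultimately show ?thesis
    using assms(3) unfolding damped_inertial_field_def case_prod_beta
    by (auto intro!: continuous_intros)
qed

lemma damped_inertial_field_lipschitz:
  fixes g :: "'a::real_normed_vector \<Rightarrow> 'a"
  assumes lipschitz: "Lg-lipschitz_on (cball (fst p) r) g"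
    and "0 < t0" "t0 \<le> t" "0 \<le> \<alpha>" "0 \<le> \<beta>"
  shows "((1 + \<beta> * Lg) * (1 + \<alpha> / t0) + Lg)-lipschitz_on (cball p r) (damped_inertial_field \<alpha> \<beta> g e t)"
proof (rule lipschitz_onI)
  have Lg: "0 \<le> Lg" using lipschitz lipschitz_on_nonneg by blast
  then show "0 \<le> (1 + \<beta> * Lg) * (1 + \<alpha> / t0) + Lg" using assms by simp
  fix u w assume "u \<in> cball p r" "w \<in> cball p r"
  then have "fst u \<in> cball (fst p) r" "fst w \<in> cball (fst p) r"
    using dist_fst_le[of p u] dist_fst_le[of p w] by auto
  define n where "n = dist u w"
  have dg: "norm (g (fst u) - g (fst w)) \<le> Lg * n"
    using lipschitz_onD[OF lipschitz \<open>fst u \<in> _\<close> \<open>fst w \<in> _\<close>] dist_fst_le[of u w] Lg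
    by (simp add: dist_norm n_def) (meson mult_left_mono order_trans)
  define d where "d = (snd u - snd w) - \<beta> *\<^sub>R (g (fst u) - g (fst w))"
  have dd: "norm d \<le> (1 + \<beta> * Lg) * n"
  proof -
    have "norm d \<le> norm (snd u - snd w) + \<beta> * norm (g (fst u) - g (fst w))"
      unfolding d_def using norm_triangle_ineq4 \<open>0 \<le> \<beta>\<close> by (metis abs_of_nonneg norm_scaleR)
    also have "\<dots> \<le> n + \<beta> * (Lg * n)"
      using dist_snd_le[of u w] dg \<open>0 \<le> \<beta>\<close> by (intro add_mono mult_left_mono) (auto simp: n_def dist_norm)
    finally show ?thesis by (simp add: algebra_simps)
  qed
  have damping: "0 \<le> \<alpha> / t" "\<alpha> / t \<le> \<alpha> / t0" using assms by (auto intro: divide_left_mono)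
  have "damped_inertial_field \<alpha> \<beta> g e t u - damped_inertial_field \<alpha> \<beta> g e t w
      = (d, - (\<alpha> / t) *\<^sub>R d - (g (fst u) - g (fst w)))"
    unfolding damped_inertial_field_def d_def by (simp add: algebra_simps)
  then have "dist (damped_inertial_field \<alpha> \<beta> g e t u) (damped_inertial_field \<alpha> \<beta> g e t w)
      \<le> norm d + norm (- (\<alpha> / t) *\<^sub>R d - (g (fst u) - g (fst w)))"
    by (simp add: dist_norm norm_Pair_le)
  also have "\<dots> \<le> norm d + ((\<alpha> / t) * norm d + norm (g (fst u) - g (fst w)))"
    using norm_triangle_ineq4[of "- (\<alpha> / t) *\<^sub>R d"] damping assms(2,3,4) by simp
  also have "\<dots> \<le> (1 + \<beta> * Lg) * n + ((\<alpha> / t0) * ((1 + \<beta> * Lg) * n) + Lg * n)"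
    using dd dg damping by (intro add_mono mult_mono) auto
  finally show "dist (damped_inertial_field \<alpha> \<beta> g e t u) (damped_inertial_field \<alpha> \<beta> g e t w)
      \<le> ((1 + \<beta> * Lg) * (1 + \<alpha> / t0) + Lg) * dist u w"
    by (simp add: n_def algebra_simps)
qed

lemma classical_solution_imp_ode_solution:
  assumes "classical_solution \<alpha> \<beta> t0 g e x0 v0 y"
  obtains u where "ode_solution_on (damped_inertial_field \<alpha> \<beta> g e) {t0..} u"
    "u t0 = (x0, v0 + \<beta> *\<^sub>R (g x0 + e t0))" "\<And>t. fst (u t) = y t"
proof -
  obtain y' y'' where y': "\<And>t. t \<in> {t0..} \<Longrightarrow> (y has_vector_derivative y' t) (at t within {t0..})"
    and y'': "\<And>t. t \<in> {t0..} \<Longrightarrow> (y' has_vector_derivative y'' t) (at t within {t0..})"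
    and equation: "\<And>t. t \<in> {t0..} \<Longrightarrow> \<exists>w. ((\<lambda>s. g (y s) + e s) has_vector_derivative w) (at t within {t0..})
      \<and> y'' t + (\<alpha> / t) *\<^sub>R y' t + \<beta> *\<^sub>R w + g (y t) + e t = 0"
    and "y t0 = x0" "y' t0 = v0"
    using assms unfolding classical_solution_def by blast
  define u where "u t = (y t, y' t + \<beta> *\<^sub>R (g (y t) + e t))" for t
  have "ode_solution_on (damped_inertial_field \<alpha> \<beta> g e) {t0..} u"
    unfolding ode_solution_on_def
  proof
    fix t assume t: "t \<in> {t0..}"
    then obtain w where w: "((\<lambda>s. g (y s) + e s) has_vector_derivative w) (at t within {t0..})"
      and eq: "y'' t + (\<alpha> / t) *\<^sub>R y' t + \<beta> *\<^sub>R w + g (y t) + e t = 0"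
      using equation by blast
    have "(u has_vector_derivative (y' t, y'' t + \<beta> *\<^sub>R w)) (at t within {t0..})"
      unfolding u_def[abs_def] using y'[OF t] y''[OF t]
      by (intro has_vector_derivative_Pair has_vector_derivative_add
          bounded_linear.has_vector_derivative[OF bounded_linear_scaleR_right w])
    moreover have "y'' t + \<beta> *\<^sub>R w = - (\<alpha> / t) *\<^sub>R y' t - g (y t) - e t"
      using eq by (simp add: algebra_simps eq_neg_iff_add_eq_0)
    ultimately show "(u has_vector_derivative damped_inertial_field \<alpha> \<beta> g e t (u t)) (at t within {t0..})"
      by (simp add: damped_inertial_field_def u_def)
  qed
  moreover have "u t0 = (x0, v0 + \<beta> *\<^sub>R (g x0 + e t0))" using \<open>y t0 = x0\<close> \<open>y' t0 = v0\<close> by (simp add: u_def)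
  ultimately show thesis by (rule that) (simp add: u_def)
qed

(* Sort banach is not inferred from {real_normed_vector, complete_space}, so the state space
   'a \<times> 'a needs this instance for 'a :: {real_inner, complete_space}. *)
instance prod :: ("{real_normed_vector,complete_space}", "{real_normed_vector,complete_space}") banach ..

locale damped_inertial_gradient =
  fixes f :: "'a::{real_inner,complete_space} \<Rightarrow> real" and g :: "'a \<Rightarrow> 'a"
    and H :: "'a \<Rightarrow> ('a \<Rightarrow>\<^sub>L 'a)" and e e' :: "real \<Rightarrow> 'a" and \<alpha> \<beta> t0 :: real
  assumes convex: "convex_on UNIV f" and bounded_below: "bdd_below (range f)"
    and gradient: "\<And>x. (f has_derivative (\<lambda>h. inner (g x) h)) (at x)"
    and hessian: "\<And>x. (g has_derivative blinfun_apply (H x)) (at x)"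
    and hessian_continuous: "continuous_on UNIV H"
    and perturbation: "\<And>t. t \<ge> t0 \<Longrightarrow> (e has_vector_derivative e' t) (at t within {t0..})"
    and perturbation_continuous: "continuous_on {t0..} e'"
    and t0_pos: "t0 > 0" and \<alpha>_nonneg: "\<alpha> \<ge> 0" and \<beta>_nonneg: "\<beta> \<ge> 0"
begin

abbreviation "F \<equiv> damped_inertial_field \<alpha> \<beta> g e"

lemma e_continuous: "continuous_on {t0..} e"
  unfolding continuous_on_eq_continuous_within
  by (auto intro: has_vector_derivative_continuous[OF perturbation])

lemma g_continuous: "continuous_on UNIV g"
  by (rule continuous_at_imp_continuous_on) (use hessian has_derivative_continuous in blast)

lemma perturbation_within:
  "t0 \<le> t \<Longrightarrow> S \<subseteq> {t0..} \<Longrightarrow> (e has_vector_derivative e' t) (at t within S)"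
  using perturbation by (rule has_vector_derivative_within_subset)

sublocale ode: uniformly_locally_lipschitz_ode F t0
proof
  show "continuous_on ({t0..} \<times> UNIV) (\<lambda>(t, u). F t u)"
    by (rule damped_inertial_field_continuous[OF g_continuous e_continuous t0_pos])
  show "\<exists>r>0. \<exists>L. \<forall>t\<ge>t0. L-lipschitz_on (cball p r) (F t)" for p
  proof -
    obtain r Lg where "r > 0" "Lg-lipschitz_on (cball (fst p) r) g"
      using continuous_derivative_imp_locally_lipschitz[OF hessian hessian_continuous] by blast
    then show ?thesis
      using damped_inertial_field_lipschitz t0_pos \<alpha>_nonneg \<beta>_nonneg by blast
  qed
qed

definition velocity :: "(real \<Rightarrow> 'a \<times> 'a) \<Rightarrow> real \<Rightarrow> 'a"
  where "velocity u t = snd (u t) - \<beta> *\<^sub>R (g (fst (u t)) + e t)"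

definition acceleration :: "(real \<Rightarrow> 'a \<times> 'a) \<Rightarrow> real \<Rightarrow> 'a"
  where "acceleration u t = - (\<alpha> / t) *\<^sub>R velocity u t - g (fst (u t)) - e t
    - \<beta> *\<^sub>R (H (fst (u t)) (velocity u t) + e' t)"

definition energy :: "(real \<Rightarrow> 'a \<times> 'a) \<Rightarrow> real \<Rightarrow> real"
  where "energy u t = (norm (velocity u t))\<^sup>2 / 2 + f (fst (u t))"

lemma solution_derivatives:
  assumes u: "(u has_vector_derivative F t (u t)) (at t within S)"
    and e: "(e has_vector_derivative e' t) (at t within S)"
  shows position_derivative: "((\<lambda>s. fst (u s)) has_vector_derivative velocity u t) (at t within S)"
    and gradient_derivative:
      "((\<lambda>s. g (fst (u s)) + e s) has_vector_derivative H (fst (u t)) (velocity u t) + e' t) (at t within S)"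
    and velocity_derivative: "(velocity u has_vector_derivative acceleration u t) (at t within S)"
proof -
  show x': "((\<lambda>s. fst (u s)) has_vector_derivative velocity u t) (at t within S)"
    using bounded_linear.has_vector_derivative[OF bounded_linear_fst u]
    by (simp add: damped_inertial_field_def velocity_def)
  have "((\<lambda>s. g (fst (u s))) has_vector_derivative H (fst (u t)) (velocity u t)) (at t within S)"
    using has_derivative_compose[OF x'[unfolded has_vector_derivative_def] hessian]
    by (simp add: has_vector_derivative_def blinfun.scaleR_right)
  then show g': "((\<lambda>s. g (fst (u s)) + e s) has_vector_derivative H (fst (u t)) (velocity u t) + e' t) (at t within S)"
    using e by (rule has_vector_derivative_add)
  have "((\<lambda>s. snd (u s)) has_vector_derivative snd (F t (u t))) (at t within S)"
    using bounded_linear.has_vector_derivative[OF bounded_linear_snd u] .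
  from has_vector_derivative_diff[OF this bounded_linear.has_vector_derivative[OF bounded_linear_scaleR_right g']]
  show "(velocity u has_vector_derivative acceleration u t) (at t within S)"
    unfolding velocity_def[abs_def] by (simp add: damped_inertial_field_def acceleration_def velocity_def)
qed

lemma velocity_continuous:
  assumes "ode_solution_on F S u" "S \<subseteq> {t0..}"
  shows "continuous_on S (velocity u)"
  unfolding continuous_on_eq_continuous_within
proof
  fix t assume "t \<in> S"
  with assms have "(u has_vector_derivative F t (u t)) (at t within S)"
    and "(e has_vector_derivative e' t) (at t within S)"
    by (auto simp: ode_solution_on_def intro: perturbation_within)
  then show "continuous (at t within S) (velocity u)"
    by (rule velocity_derivative[THEN has_vector_derivative_continuous])
qed

lemma energy_derivative:
  assumes u: "(u has_vector_derivative F t (u t)) (at t within S)"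
    and e: "(e has_vector_derivative e' t) (at t within S)"
  shows "(energy u has_real_derivative
      inner (velocity u t) (acceleration u t) + inner (g (fst (u t))) (velocity u t)) (at t within S)"
proof -
  have v: "(velocity u has_derivative (\<lambda>h. h *\<^sub>R acceleration u t)) (at t within S)"
    using velocity_derivative[OF u e] by (simp add: has_vector_derivative_def)
  have "((\<lambda>s. f (fst (u s))) has_derivative (\<lambda>h. inner (g (fst (u t))) (h *\<^sub>R velocity u t))) (at t within S)"
    using has_derivative_compose[OF position_derivative[OF u e, unfolded has_vector_derivative_def] gradient] .
  then have "(energy u has_derivative (\<lambda>h. (inner (velocity u t) (h *\<^sub>R acceleration u t)
      + inner (h *\<^sub>R acceleration u t) (velocity u t)) / 2
      + inner (g (fst (u t))) (h *\<^sub>R velocity u t))) (at t within S)"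
    unfolding energy_def[abs_def] power2_norm_eq_inner
    by (intro has_derivative_add bounded_linear.has_derivative[OF bounded_linear_divide]
        has_derivative_inner v)
  then show ?thesis
    unfolding has_field_derivative_def
    by (rule has_derivative_eq_rhs) (simp add: fun_eq_iff inner_commute algebra_simps)
qed

lemma energy_dissipation:
  assumes "t > 0"
  shows "inner (velocity u t) (acceleration u t) + inner (g (fst (u t))) (velocity u t)
    \<le> norm (velocity u t) * norm (e t + \<beta> *\<^sub>R e' t)"
proof -
  define v where "v = velocity u t"
  define x where "x = fst (u t)"
  have "0 \<le> inner (H x v) v"
    by (rule convex_on_hessian_nonneg[OF convex gradient hessian])
  then have "0 \<le> \<beta> * inner v (H x v)" using \<beta>_nonneg by (simp add: inner_commute)
  moreover have "0 \<le> (\<alpha> / t) * inner v v" using \<alpha>_nonneg \<open>t > 0\<close> by simp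
  moreover have "- inner v (e t + \<beta> *\<^sub>R e' t) \<le> norm v * norm (e t + \<beta> *\<^sub>R e' t)"
    using norm_cauchy_schwarz[of v "- (e t + \<beta> *\<^sub>R e' t)"]
    unfolding inner_minus_right norm_minus_cancel .
  moreover have "inner v (acceleration u t) = - (\<alpha> / t) * inner v v - inner v (g x) - inner v (e t)
      - \<beta> * inner v (H x v) - \<beta> * inner v (e' t)"
    unfolding acceleration_def v_def[symmetric] x_def[symmetric]
    by (simp add: inner_diff_right inner_add_right distrib_left)
  moreover have "inner v (e t + \<beta> *\<^sub>R e' t) = inner v (e t) + \<beta> * inner v (e' t)"
    by (simp add: inner_add_right)
  ultimately show ?thesis
    using inner_commute[of "g x" v] unfolding v_def[symmetric] x_def[symmetric] by linarith
qed

lemma energy_growth: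
  assumes "t0 \<le> s" and u: "ode_solution_on F {t0..s} u"
    and n: "\<And>\<tau>. \<tau> \<in> {t0..s} \<Longrightarrow> norm (velocity u \<tau>) \<le> n"
    and C: "\<And>\<tau>. \<tau> \<in> {t0..s} \<Longrightarrow> norm (e \<tau> + \<beta> *\<^sub>R e' \<tau>) \<le> C"
  shows "energy u s \<le> energy u t0 + (s - t0) * (n * C)"
proof (cases "t0 = s")
  case False
  then have "t0 < s" using \<open>t0 \<le> s\<close> by simp
  define D where "D \<tau> = inner (velocity u \<tau>) (acceleration u \<tau>) + inner (g (fst (u \<tau>))) (velocity u \<tau>)"
    for \<tau>
  have "\<exists>\<xi>\<in>{t0<..<s}. energy u s - energy u t0 = (\<lambda>h. D \<xi> * h) (s - t0)"
  proof (rule mvt_simple[OF \<open>t0 < s\<close>])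
    fix \<tau> assume "t0 \<le> \<tau>" "\<tau> \<le> s"
    have "(e has_vector_derivative e' \<tau>) (at \<tau> within {t0..s})"
      using \<open>t0 \<le> \<tau>\<close> by (rule perturbation_within) auto
    with u \<open>t0 \<le> \<tau>\<close> \<open>\<tau> \<le> s\<close> show "(energy u has_derivative (\<lambda>h. D \<tau> * h)) (at \<tau> within {t0..s})"
      using energy_derivative[of u \<tau> "{t0..s}"] by (simp add: ode_solution_on_def has_field_derivative_def D_def)
  qed
  then obtain \<xi> where \<xi>: "\<xi> \<in> {t0<..<s}" and "energy u s - energy u t0 = D \<xi> * (s - t0)"
    by auto
  moreover have "D \<xi> \<le> n * C"
  proof -
    have "\<xi> > 0" using \<xi> t0_pos by simp
    then have "D \<xi> \<le> norm (velocity u \<xi>) * norm (e \<xi> + \<beta> *\<^sub>R e' \<xi>)"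
      unfolding D_def by (rule energy_dissipation)
    also have "\<dots> \<le> n * C"
      using \<xi> n[of \<xi>] C[of \<xi>] by (intro mult_mono) (auto intro: order_trans[OF norm_ge_zero])
    finally show ?thesis .
  qed
  moreover have "D \<xi> * (s - t0) \<le> (n * C) * (s - t0)"
    using \<open>D \<xi> \<le> n * C\<close> \<open>t0 < s\<close> by (simp add: mult_right_mono)
  ultimately show ?thesis by (metis diff_le_eq add.commute mult.commute)
qed simp

lemma velocity_bounded:
  assumes "t0 < T" and u: "ode_solution_on F {t0..<T} u"
  obtains B where "\<And>t. t \<in> {t0..<T} \<Longrightarrow> norm (velocity u t) \<le> B"
proof -
  have "continuous_on {t0..T} (\<lambda>\<tau>. e \<tau> + \<beta> *\<^sub>R e' \<tau>)"
    by (intro continuous_intros continuous_on_subset[OF e_continuous]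
        continuous_on_subset[OF perturbation_continuous]) auto
  then have "bounded ((\<lambda>\<tau>. e \<tau> + \<beta> *\<^sub>R e' \<tau>) ` {t0..T})"
    by (intro compact_imp_bounded compact_continuous_image) auto
  then obtain C where C: "\<And>\<tau>. \<tau> \<in> {t0..T} \<Longrightarrow> norm (e \<tau> + \<beta> *\<^sub>R e' \<tau>) \<le> C"
    unfolding bounded_iff by blast
  have "norm (e t0 + \<beta> *\<^sub>R e' t0) \<le> C" using C \<open>t0 < T\<close> by simp
  then have "0 \<le> C" by (rule order_trans[OF norm_ge_zero])
  obtain m where m: "\<And>x. m \<le> f x" using bounded_below by (auto simp: bdd_below_def)
  define A where "A = energy u t0 - m"
  define K where "K = (T - t0) * C"
  have "0 \<le> A"
    unfolding A_def energy_def using m[of "fst (u t0)"] zero_le_power2[of "norm (velocity u t0)"] by linarith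
  have "0 \<le> K" using \<open>0 \<le> C\<close> \<open>t0 < T\<close> by (simp add: K_def)
  have "norm (velocity u t) \<le> 1 + 2 * A + 2 * K" if t: "t \<in> {t0..<T}" for t
  proof -
    have ut: "ode_solution_on F {t0..t} u" using u by (rule ode_solution_on_subset) (use t in auto)
    have "continuous_on {t0..t} (velocity u)" using ut by (rule velocity_continuous) auto
    then have "continuous_on {t0..t} (\<lambda>\<tau>. norm (velocity u \<tau>))" by (rule continuous_on_norm)
    moreover have "{t0..t} \<noteq> {}" using t by simp
    ultimately obtain s where s: "s \<in> {t0..t}"
      and max: "\<And>\<tau>. \<tau> \<in> {t0..t} \<Longrightarrow> norm (velocity u \<tau>) \<le> norm (velocity u s)"
      using continuous_attains_sup[OF compact_Icc] by blast
    define n where "n = norm (velocity u s)"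
    have "n\<^sup>2 / 2 + m \<le> energy u s" using m[of "fst (u s)"] by (simp add: energy_def n_def)
    also have "\<dots> \<le> energy u t0 + (s - t0) * (n * C)"
      using s t max C by (intro energy_growth ode_solution_on_subset[OF ut]) (auto simp: n_def)
    also have "\<dots> \<le> energy u t0 + (T - t0) * (n * C)"
      using s t \<open>0 \<le> C\<close> by (auto simp: n_def intro!: mult_right_mono)
    also have "\<dots> = energy u t0 + K * n" by (simp add: K_def)
    finally have "n * n \<le> 2 * A + 2 * K * n" by (simp add: A_def power2_eq_square algebra_simps)
    then have "n \<le> 1 + 2 * A + 2 * K"
      using \<open>0 \<le> A\<close> \<open>0 \<le> K\<close> by (intro square_le_linear_imp_le) auto
    then show ?thesis using max[of t] t by (simp add: n_def)
  qed
  then show thesis by (rule that)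
qed

lemma position_converges_at_left:
  assumes "t0 < T" and u: "ode_solution_on F {t0..<T} u"
  obtains x where "((\<lambda>t. fst (u t)) \<longlongrightarrow> x) (at_left T)"
proof -
  obtain B where B: "\<And>t. t \<in> {t0..<T} \<Longrightarrow> norm (velocity u t) \<le> B"
    using velocity_bounded[OF assms] by blast
  have "0 \<le> B" using B[of t0] \<open>t0 < T\<close> by (simp add: order_trans[OF norm_ge_zero])
  have "((\<lambda>t. fst (u t)) has_vector_derivative velocity u t) (at t within {t0..<T})"
    if "t \<in> {t0..<T}" for t
    using u that by (intro position_derivative perturbation_within) (auto simp: ode_solution_on_def)
  then have "B-lipschitz_on {t0..<T} (\<lambda>t. fst (u t))"
    using B \<open>0 \<le> B\<close> by (intro bounded_vector_derivative_imp_lipschitz) auto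
  then show thesis using \<open>t0 < T\<close> that by (rule lipschitz_on_has_limit_at_left)
qed

lemma damped_inertial_field_snd_bound:
  assumes "t0 \<le> t"
  shows "norm (snd (F t (u t))) \<le> \<alpha> / t0 * norm (velocity u t) + norm (g (fst (u t))) + norm (e t)"
proof -
  define v where "v = velocity u t"
  have "snd (F t (u t)) = - ((\<alpha> / t) *\<^sub>R v) - g (fst (u t)) - e t"
    by (simp add: damped_inertial_field_def velocity_def v_def)
  also have "norm \<dots> \<le> norm ((\<alpha> / t) *\<^sub>R v) + norm (g (fst (u t))) + norm (e t)"
    using norm_triangle_ineq4[of "- ((\<alpha> / t) *\<^sub>R v) - g (fst (u t))" "e t"]
      norm_triangle_ineq4[of "- ((\<alpha> / t) *\<^sub>R v)" "g (fst (u t))"]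
    unfolding norm_minus_cancel by linarith
  also have "norm ((\<alpha> / t) *\<^sub>R v) \<le> \<alpha> / t0 * norm v"
    using \<alpha>_nonneg t0_pos \<open>t0 \<le> t\<close> by (simp add: divide_left_mono mult_right_mono)
  finally show ?thesis by (simp add: v_def)
qed

lemma solution_converges_at_left:
  assumes "t0 < T" and u: "ode_solution_on F {t0..<T} u"
  obtains p where "(u \<longlongrightarrow> p) (at_left T)"
proof -
  obtain B where B: "\<And>t. t \<in> {t0..<T} \<Longrightarrow> norm (velocity u t) \<le> B"
    using velocity_bounded[OF assms] by blast
  obtain x where x: "((\<lambda>t. fst (u t)) \<longlongrightarrow> x) (at_left T)"
    using position_converges_at_left[OF assms] by blast
  have "((\<lambda>t. g (fst (u t))) \<longlongrightarrow> g x) (at_left T)"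
    using g_continuous x by (intro isCont_tendsto_compose[of x g]) (auto simp: continuous_on_eq_continuous_at)
  then obtain a where "t0 \<le> a" "a < T" and g_bound: "\<And>t. t \<in> {a..<T} \<Longrightarrow> norm (g (fst (u t))) \<le> norm (g x) + 1"
    using tendsto_at_left_imp_bounded_near[OF _ \<open>t0 < T\<close>] by metis
  have "continuous_on {t0..T} e" using e_continuous by (rule continuous_on_subset) auto
  then have "bounded (e ` {t0..T})" by (intro compact_imp_bounded compact_continuous_image) auto
  then obtain C where C: "\<And>t. t \<in> {t0..T} \<Longrightarrow> norm (e t) \<le> C" unfolding bounded_iff by blast
  define K where "K = \<alpha> / t0 * B + (norm (g x) + 1) + C"
  have "norm (snd (F t (u t))) \<le> K" if "t \<in> {a..<T}" for t
  proof -
    have "t \<in> {t0..<T}" using that \<open>t0 \<le> a\<close> by auto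
    then have "\<alpha> / t0 * norm (velocity u t) \<le> \<alpha> / t0 * B"
      using B \<alpha>_nonneg t0_pos by (intro mult_left_mono) auto
    with damped_inertial_field_snd_bound[of t u] g_bound[OF that] C[of t] \<open>t \<in> {t0..<T}\<close>
    show ?thesis unfolding K_def by force
  qed
  moreover have "0 \<le> K"
    using calculation[of a] \<open>a < T\<close> by (simp add: order_trans[OF norm_ge_zero])
  moreover have "((\<lambda>t. snd (u t)) has_vector_derivative snd (F t (u t))) (at t within {a..<T})"
    if "t \<in> {a..<T}" for t
  proof -
    have "(u has_vector_derivative F t (u t)) (at t within {t0..<T})"
      using u that \<open>t0 \<le> a\<close> by (auto simp: ode_solution_on_def)
    then have "((\<lambda>t. snd (u t)) has_vector_derivative snd (F t (u t))) (at t within {t0..<T})"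
      by (rule bounded_linear.has_vector_derivative[OF bounded_linear_snd])
    then show ?thesis by (rule has_vector_derivative_within_subset) (use \<open>t0 \<le> a\<close> in auto)
  qed
  ultimately have "K-lipschitz_on {a..<T} (\<lambda>t. snd (u t))"
    by (intro bounded_vector_derivative_imp_lipschitz) auto
  then obtain z where "((\<lambda>t. snd (u t)) \<longlongrightarrow> z) (at_left T)"
    using \<open>a < T\<close> by (rule lipschitz_on_has_limit_at_left)
  with x have "((\<lambda>t. (fst (u t), snd (u t))) \<longlongrightarrow> (x, z)) (at_left T)" by (rule tendsto_Pair)
  then show thesis by (intro that[of "(x, z)"]) simp
qed

lemma ode_solution_imp_classical_solution:
  assumes u: "ode_solution_on F {t0..} u" and "u t0 = (x0, v0 + \<beta> *\<^sub>R (g x0 + e t0))"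
  shows "classical_solution \<alpha> \<beta> t0 g e x0 v0 (\<lambda>t. fst (u t))"
proof -
  have u': "(u has_vector_derivative F t (u t)) (at t within {t0..})"
    and e': "(e has_vector_derivative e' t) (at t within {t0..})" if "t \<in> {t0..}" for t
    using u that by (auto simp: ode_solution_on_def intro: perturbation_within)
  have x': "((\<lambda>t. fst (u t)) has_vector_derivative velocity u t) (at t within {t0..})"
    and x'': "(velocity u has_vector_derivative acceleration u t) (at t within {t0..})"
    and gradient': "((\<lambda>s. g (fst (u s)) + e s) has_vector_derivative H (fst (u t)) (velocity u t) + e' t)
      (at t within {t0..})"
    if "t \<in> {t0..}" for t
    using position_derivative velocity_derivative gradient_derivative u'[OF that] e'[OF that] by blast+
  have "continuous_on {t0..} (velocity u)" using u by (rule velocity_continuous) simp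
  moreover have "continuous_on {t0..} u" using u by (rule ode_solution_on_continuous)
  moreover have "continuous_on {t0..} (\<lambda>t. \<alpha> / t)"
    using t0_pos by (intro continuous_intros) auto
  ultimately have "continuous_on {t0..} (acceleration u)"
    unfolding acceleration_def[abs_def]
    by (intro continuous_intros e_continuous perturbation_continuous
        continuous_on_compose2[OF g_continuous] continuous_on_compose2[OF hessian_continuous])
       (use t0_pos in auto)
  moreover have "acceleration u t + (\<alpha> / t) *\<^sub>R velocity u t
      + \<beta> *\<^sub>R (H (fst (u t)) (velocity u t) + e' t) + g (fst (u t)) + e t = 0" for t
    by (simp add: acceleration_def algebra_simps)
  moreover have "fst (u t0) = x0" "velocity u t0 = v0"
    using \<open>u t0 = _\<close> by (simp_all add: velocity_def)
  ultimately show ?thesis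
    unfolding classical_solution_def using x' x'' gradient' by blast
qed

lemma classical_solution_exists:
  obtains x where "classical_solution \<alpha> \<beta> t0 g e x0 v0 x"
proof -
  obtain u where "u t0 = (x0, v0 + \<beta> *\<^sub>R (g x0 + e t0))" and "ode_solution_on F {t0..} u"
  proof (rule ode.global_existence)
    show "\<exists>p. (u \<longlongrightarrow> p) (at_left T)" if "t0 < T" "ode_solution_on F {t0..<T} u" for T u
      using solution_converges_at_left[OF that] by blast
  qed
  then show thesis by (intro that[of "\<lambda>t. fst (u t)"] ode_solution_imp_classical_solution)
qed

lemma classical_solution_unique:
  assumes "classical_solution \<alpha> \<beta> t0 g e x0 v0 x" "classical_solution \<alpha> \<beta> t0 g e x0 v0 y" "t0 \<le> t"
  shows "x t = y t"
proof -
  obtain u where u: "ode_solution_on F {t0..} u" "u t0 = (x0, v0 + \<beta> *\<^sub>R (g x0 + e t0))"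
    and "\<And>t. fst (u t) = x t"
    using classical_solution_imp_ode_solution[OF assms(1)] by blast
  moreover obtain w where w: "ode_solution_on F {t0..} w" "w t0 = (x0, v0 + \<beta> *\<^sub>R (g x0 + e t0))"
    and "\<And>t. fst (w t) = y t"
    using classical_solution_imp_ode_solution[OF assms(2)] by blast
  moreover have "ode_solution_on F {t0..t} u" "ode_solution_on F {t0..t} w"
    using u(1) w(1) by (auto elim!: ode_solution_on_subset)
  then have "u t = w t"
    using ode.solution_unique[of t0 t u w t] u(2) w(2) \<open>t0 \<le> t\<close> by auto
  ultimately show ?thesis by metis
qed

end

lemma damped_inertial_gradientI:
  assumes "convex_on UNIV f" "bdd_below (range f)" "C2_with_gradient f g" "C1_on_halfline t0 e"
    "t0 > 0" "\<alpha> \<ge> 0" "\<beta> \<ge> 0"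
  obtains H e' where "damped_inertial_gradient f g H e e' \<alpha> \<beta> t0"
proof -
  obtain H where "\<And>x. (g has_derivative blinfun_apply (H x)) (at x)" "continuous_on UNIV H"
    using \<open>C2_with_gradient f g\<close> unfolding C2_with_gradient_def by blast
  moreover obtain e' where "\<And>t. t \<ge> t0 \<Longrightarrow> (e has_vector_derivative e' t) (at t within {t0..})"
    "continuous_on {t0..} e'"
    using \<open>C1_on_halfline t0 e\<close> unfolding C1_on_halfline_def by auto
  ultimately have "damped_inertial_gradient f g H e e' \<alpha> \<beta> t0"
    using assms unfolding C2_with_gradient_def by unfold_locales blast+
  then show thesis by (rule that)
qed

theorem corollary1:
  fixes f :: "'a::{real_inner,complete_space} \<Rightarrow> real"
    and gradf :: "'a \<Rightarrow> 'a"
    and e :: "real \<Rightarrow> 'a"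
    and \<alpha> \<beta> t0 :: real and x0 v0 :: 'a
  assumes "convex_on UNIV f"
    and "\<exists>z. \<forall>y. f z \<le> f y"
    and "C2_with_gradient f gradf"
    and "C1_on_halfline t0 e"
    and "t0 > 0" and "\<alpha> \<ge> 0" and "\<beta> \<ge> 0"
  shows "\<exists>x. classical_solution \<alpha> \<beta> t0 gradf e x0 v0 x \<and>
           (\<forall>y. classical_solution \<alpha> \<beta> t0 gradf e x0 v0 y \<longrightarrow> (\<forall>t\<ge>t0. y t = x t))"
proof -
  have "bdd_below (range f)" using assms(2) by (auto simp: bdd_below_def)
  then obtain H e' where "damped_inertial_gradient f gradf H e e' \<alpha> \<beta> t0"
    using damped_inertial_gradientI assms by metis
  then interpret damped_inertial_gradient f gradf H e e' \<alpha> \<beta> t0 .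
  obtain x where "classical_solution \<alpha> \<beta> t0 gradf e x0 v0 x" by (rule classical_solution_exists)
  with classical_solution_unique show ?thesis by blast
qed

end
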